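(* Let $L:\mathcal{S}\times\{0,1\}\to[0,1]$ be a Lyapunov function with respect to some stochastic Markov policy $\pi_s$ (so the constraint sets below are nonempty). Define the operator $$(\mathcal{T}_{\mathrm{exp}}V)(s,x)=\max_{\pi(\cdot\mid s,x)}\big\{(\mathcal{T}_d^{\pi}V)(s,x)\ :\ (\mathcal{T}_d^{\pi}L)(s,x)\le L(s,x)\big\},$$ where the maximum is over probability distributions $\pi(\cdot\mid s,x)$ on $\mathcal{A}$. Then $\mathcal{T}_{\mathrm{exp}}$ has a unique fixed point $V_{\mathrm{exp}}$, value iteration $V\mapsto\mathcal{T}_{\mathrm{exp}}V$ converges to it, and a policy $\pi_e$ attaining the maximum in $(\mathcal{T}_{\mathrm{exp}}V_{\mathrm{exp}})(s,x)$ at every $(s,x)$ satisfies $V^{\pi_e}=V_{\mathrm{exp}}$ and is an optimal solution of $$\max_{\pi}\ V^{\pi}(s_0,1)\quad\text{s.t.}\quad(\mathcal{T}_d^{\pi}L)(s,x)\le L(s,x)\ \ \forall (s,x)\in\mathcal{S}\times\{0,1\},$$ for the initial state $s_0$; in particular $V_{\mathrm{exp}}$ is the probability of unsafety under such a policy.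
   Context: Consider a Markov decision process with finite state set $\mathcal{S}$, finite action set $\mathcal{A}$ and transition probabilities $p(s'\mid s,a)$. A target (unsafe) set $\mathcal{G}\subseteq\mathcal{S}$ and a set of terminal states $\mathcal{S}_{\mathrm{term}}\subseteq\mathcal{S}$ are given, and $\mathcal{S}'=\mathcal{S}\setminus\mathcal{S}_{\mathrm{term}}$. The process is augmented with a variable $x_t\in\{0,1\}$ defined by $x_{t+1}=x_t\mathbf{1}_{\mathcal{G}^c}(s_t)$, so $(s_t,x_t)$ is Markov. A (stochastic Markov) policy $\pi$ gives probabilities $\pi(a\mid s,x)$. Let $T^*$ be the first time $t$ with $s_t\in\mathcal{S}_{\mathrm{term}}$. Standing assumption: there is an integer $m$ such that, for every policy and every initial state, $\mathcal{S}_{\mathrm{term}}$ is reached within $m$ steps with positive probability. The stage cost is $d(s,x)=x\,\mathbf{1}_{\mathcal{G}}(s)$ and $V^\pi(s,x)=\mathbb{E}^\pi\big[\sum_{t=0}^{T^*-1}d(s_t,x_t)\mid (s_0,x_0)=(s,x)\big]$ (probability of unsafety when $x=1$). The Bellman operator $\mathcal{T}_d^\pi$ acts on $V:\mathcal{S}\times\{0,1\}\to\mathbb{R}$ by $(\mathcal{T}_d^\pi V)(s,x)=d(s,x)+\sum_{a}\pi(a\mid s,x)\sum_{s'}p(s'\mid s,a)\,V(s',x\mathbf{1}_{\mathcal{G}^c}(s))$ for $s\in\mathcal{S}'$, and $(\mathcal{T}_d^\pi V)(s,x)=0$ for $s\in\mathcal{S}_{\mathrm{term}}$. Given $\alpha\in(0,1)$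 and $S_0\subseteq\mathcal{S}$, a function $L:\mathcal{S}\times\{0,1\}\to[0,1]$ is a Lyapunov function with respect to a policy $\pi$ if $(\mathcal{T}_d^{\pi}L)(s,x)\le L(s,x)$ for all $(s,x)\in\mathcal{S}\times\{0,1\}$ and $L(s,1)\le\alpha$ for all $s\in S_0$. *)

theory Defs
  imports Complex_Main
begin

text \<open>The augmented state is (s, x) with x :: bool
  (True = 1, False = 0).\<close>

definition is_mdp :: "('s::finite \<Rightarrow> 'a::finite \<Rightarrow> 's \<Rightarrow> real) \<Rightarrow> bool" where
  "is_mdp p \<longleftrightarrow> (\<forall>s a s'. 0 \<le> p s a s') \<and> (\<forall>s a. (\<Sum>s'\<in>UNIV. p s a s') = 1)"

definition is_dist :: "('a::finite \<Rightarrow> real) \<Rightarrow> bool" where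
  "is_dist q \<longleftrightarrow> (\<forall>a. 0 \<le> q a) \<and> (\<Sum>a\<in>UNIV. q a) = 1"

definition is_policy :: "('s \<Rightarrow> bool \<Rightarrow> 'a::finite \<Rightarrow> real) \<Rightarrow> bool" where
  "is_policy \<pi> \<longleftrightarrow> (\<forall>s x. is_dist (\<pi> s x))"

definition dcost :: "'s set \<Rightarrow> 's \<Rightarrow> bool \<Rightarrow> real" where
  "dcost G s x = (if x \<and> s \<in> G then 1 else 0)"

text \<open>One-step transition probability of the augmented chain (s_t,x_t) -> (s_{t+1},x_{t+1})
  under policy pi, restricted to the event that s_t is not terminal.\<close>
definition kern :: "('s::finite \<Rightarrow> 'a::finite \<Rightarrow> 's \<Rightarrow> real) \<Rightarrow> 's set \<Rightarrow> 's set
    \<Rightarrow> ('s \<Rightarrow> bool \<Rightarrow> 'a \<Rightarrow> real) \<Rightarrow> 's \<times> bool \<Rightarrow> 's \<times> bool \<Rightarrow> real" where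
  "kern p G Sterm \<pi> z w =
     (if fst z \<in> Sterm then 0
      else (\<Sum>a\<in>UNIV. \<pi> (fst z) (snd z) a * p (fst z) a (fst w))
           * (if snd w = (snd z \<and> fst z \<notin> G) then 1 else 0))"

text \<open>occ ... z n w = P( (s_n,x_n) = w and s_0,...,s_{n-1} \<notin> Sterm | (s_0,x_0) = z )\<close>
fun occ :: "('s::finite \<Rightarrow> 'a::finite \<Rightarrow> 's \<Rightarrow> real) \<Rightarrow> 's set \<Rightarrow> 's set
    \<Rightarrow> ('s \<Rightarrow> bool \<Rightarrow> 'a \<Rightarrow> real) \<Rightarrow> 's \<times> bool \<Rightarrow> nat \<Rightarrow> 's \<times> bool \<Rightarrow> real" where
  "occ p G Sterm \<pi> z 0 w = (if w = z then 1 else 0)"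
| "occ p G Sterm \<pi> z (Suc n) w =
     (\<Sum>v\<in>UNIV. occ p G Sterm \<pi> z n v * kern p G Sterm \<pi> v w)"

text \<open>V^pi(s,x) = E[ sum_{t < T*} d(s_t,x_t) ] = sum_t E[ d(s_t,x_t) 1{t < T*} ]
  (Tonelli; t < T* iff s_0,...,s_t are all non-terminal).\<close>
definition Vpi :: "('s::finite \<Rightarrow> 'a::finite \<Rightarrow> 's \<Rightarrow> real) \<Rightarrow> 's set \<Rightarrow> 's set
    \<Rightarrow> ('s \<Rightarrow> bool \<Rightarrow> 'a \<Rightarrow> real) \<Rightarrow> 's \<times> bool \<Rightarrow> real" where
  "Vpi p G Sterm \<pi> z =
     (\<Sum>t. \<Sum>w\<in>UNIV. occ p G Sterm \<pi> z t w * (if fst w \<in> Sterm then 0 else dcost G (fst w) (snd w)))"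

text \<open>Probability that s_0,...,s_n are all non-terminal (i.e. T* > n).\<close>
definition not_term_prob :: "('s::finite \<Rightarrow> 'a::finite \<Rightarrow> 's \<Rightarrow> real) \<Rightarrow> 's set \<Rightarrow> 's set
    \<Rightarrow> ('s \<Rightarrow> bool \<Rightarrow> 'a \<Rightarrow> real) \<Rightarrow> 's \<times> bool \<Rightarrow> nat \<Rightarrow> real" where
  "not_term_prob p G Sterm \<pi> z n = (\<Sum>w\<in>{w. fst w \<notin> Sterm}. occ p G Sterm \<pi> z n w)"

definition standing_assumption :: "('s::finite \<Rightarrow> 'a::finite \<Rightarrow> 's \<Rightarrow> real) \<Rightarrow> 's set \<Rightarrow> 's set \<Rightarrow> bool" where
  "standing_assumption p G Sterm \<longleftrightarrow>
     (\<exists>m::nat. \<forall>\<pi> z. is_policy \<pi> \<longrightarrow> not_term_prob p G Sterm \<pi> z m < 1)"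

definition Td_loc :: "('s \<Rightarrow> 'a::finite \<Rightarrow> 's::finite \<Rightarrow> real) \<Rightarrow> 's set \<Rightarrow> 's set
    \<Rightarrow> ('a \<Rightarrow> real) \<Rightarrow> ('s \<times> bool \<Rightarrow> real) \<Rightarrow> 's \<Rightarrow> bool \<Rightarrow> real" where
  "Td_loc p G Sterm q V s x =
     (if s \<in> Sterm then 0
      else dcost G s x + (\<Sum>a\<in>UNIV. q a * (\<Sum>s'\<in>UNIV. p s a s' * V (s', x \<and> s \<notin> G))))"

definition Td :: "('s \<Rightarrow> 'a::finite \<Rightarrow> 's::finite \<Rightarrow> real) \<Rightarrow> 's set \<Rightarrow> 's set
    \<Rightarrow> ('s \<Rightarrow> bool \<Rightarrow> 'a \<Rightarrow> real) \<Rightarrow> ('s \<times> bool \<Rightarrow> real) \<Rightarrow> 's \<times> bool \<Rightarrow> real" where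
  "Td p G Sterm \<pi> V z = Td_loc p G Sterm (\<pi> (fst z) (snd z)) V (fst z) (snd z)"

definition lyapunov :: "('s \<Rightarrow> 'a::finite \<Rightarrow> 's::finite \<Rightarrow> real) \<Rightarrow> 's set \<Rightarrow> 's set
    \<Rightarrow> real \<Rightarrow> 's set \<Rightarrow> ('s \<times> bool \<Rightarrow> real) \<Rightarrow> ('s \<Rightarrow> bool \<Rightarrow> 'a \<Rightarrow> real) \<Rightarrow> bool" where
  "lyapunov p G Sterm \<alpha> S0 L \<pi> \<longleftrightarrow>
     (\<forall>z. 0 \<le> L z \<and> L z \<le> 1) \<and>
     (\<forall>z. Td p G Sterm \<pi> L z \<le> L z) \<and>
     (\<forall>s\<in>S0. L (s, True) \<le> \<alpha>)"

definition feasible_loc :: "('s \<Rightarrow> 'a::finite \<Rightarrow> 's::finite \<Rightarrow> real) \<Rightarrow> 's set \<Rightarrow> 's set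
    \<Rightarrow> ('s \<times> bool \<Rightarrow> real) \<Rightarrow> 's \<Rightarrow> bool \<Rightarrow> ('a \<Rightarrow> real) \<Rightarrow> bool" where
  "feasible_loc p G Sterm L s x q \<longleftrightarrow> is_dist q \<and> Td_loc p G Sterm q L s x \<le> L (s, x)"

text \<open>T_exp V (s,x) = max over feasible q of (T_d^q V)(s,x) (the max is attained; written as Sup).\<close>
definition Texp :: "('s \<Rightarrow> 'a::finite \<Rightarrow> 's::finite \<Rightarrow> real) \<Rightarrow> 's set \<Rightarrow> 's set
    \<Rightarrow> ('s \<times> bool \<Rightarrow> real) \<Rightarrow> ('s \<times> bool \<Rightarrow> real) \<Rightarrow> 's \<times> bool \<Rightarrow> real" where
  "Texp p G Sterm L V z =
     Sup {Td_loc p G Sterm q V (fst z) (snd z) | q. feasible_loc p G Sterm L (fst z) (snd z) q}"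

end

theory Submission
  imports Defs "HOL-Analysis.Urysohn"
begin

text \<open>Let M map f to the largest, over all actions, expected value of f after one step (and to 0
  at terminal states). Every Bellman operator T_d^pi, and hence T_exp as a supremum of them over the
  nonempty constraint sets, satisfies |T V - T W| \<le> M |V - W|. Under the standing assumption
  M^N 1 \<le> \<gamma> < 1 for some N: otherwise the states at which all iterates M^k 1 equal 1 would form a
  nonempty set that some deterministic policy never leaves. So all these operators are N-step
  contractions for the sup distance, and each has a unique fixed point attracting all iterates.
  For T_d^pi this fixed point is V^pi, the iterates from 0 being the partial sums of the expected
  costs. A greedy policy makes V_exp a fixed point of its own Bellman operator, so V^pi_e = V_exp;
  for a feasible pi, T_d^pi V_exp \<le> T_exp V_exp = V_exp, and monotonicity gives V^pi \<le> V_exp.\<close>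

definition sup_dist :: "('z::finite \<Rightarrow> real) \<Rightarrow> ('z \<Rightarrow> real) \<Rightarrow> real" where
  "sup_dist V W = Max (range (\<lambda>z. \<bar>V z - W z\<bar>))"

lemma abs_le_sup_dist: "\<bar>V z - W z\<bar> \<le> sup_dist V W"
  unfolding sup_dist_def by (rule Max_ge) auto

lemma sup_dist_le_iff: "sup_dist V W \<le> c \<longleftrightarrow> (\<forall>z. \<bar>V z - W z\<bar> \<le> c)"
  unfolding sup_dist_def by (subst Max_le_iff) auto

lemma sup_dist_less_iff: "sup_dist V W < c \<longleftrightarrow> (\<forall>z. \<bar>V z - W z\<bar> < c)"
  unfolding sup_dist_def by (subst Max_less_iff) auto

lemma sup_dist_nonneg: "0 \<le> sup_dist V W"
  using abs_le_sup_dist[of V undefined W] by linarith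

lemma Metric_space_sup_dist: "Metric_space UNIV (sup_dist :: ('z::finite \<Rightarrow> real) \<Rightarrow> _)"
proof
  fix V W U :: "'z \<Rightarrow> real"
  show "0 \<le> sup_dist V W" by (rule sup_dist_nonneg)
  show "sup_dist V W = sup_dist W V" unfolding sup_dist_def by (simp add: abs_minus_commute)
  show "sup_dist V W = 0 \<longleftrightarrow> V = W"
  proof
    assume "sup_dist V W = 0"
    then show "V = W"
      using abs_le_sup_dist[of V _ W] by (auto intro: ext)
  qed (simp add: sup_dist_def)
  show "sup_dist V U \<le> sup_dist V W + sup_dist W U"
    unfolding sup_dist_le_iff
  proof
    fix z
    show "\<bar>V z - U z\<bar> \<le> sup_dist V W + sup_dist W U"
      using abs_le_sup_dist[of V z W] abs_le_sup_dist[of W z U] by linarith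
  qed
qed

lemma mcomplete_sup_dist: "Metric_space.mcomplete (UNIV :: ('z::finite \<Rightarrow> real) set) sup_dist"
  unfolding Metric_space.mcomplete_def[OF Metric_space_sup_dist]
proof (intro allI impI)
  fix \<sigma> :: "nat \<Rightarrow> 'z \<Rightarrow> real"
  assume "Metric_space.MCauchy UNIV sup_dist \<sigma>"
  then have cauchy: "\<exists>N. \<forall>n n'. N \<le> n \<longrightarrow> N \<le> n' \<longrightarrow> sup_dist (\<sigma> n) (\<sigma> n') < e" if "e > 0" for e
    using that unfolding Metric_space.MCauchy_def[OF Metric_space_sup_dist] by blast
  have "\<exists>l. (\<lambda>n. \<sigma> n z) \<longlonglongrightarrow> l" for z
    unfolding convergent_eq_Cauchy
  proof (rule metric_CauchyI)
    fix e :: real assume "e > 0"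
    then show "\<exists>N. \<forall>m\<ge>N. \<forall>n\<ge>N. dist (\<sigma> m z) (\<sigma> n z) < e"
      using cauchy abs_le_sup_dist[of "\<sigma> _" z] unfolding dist_real_def by (meson le_less_trans)
  qed
  then obtain F where F: "\<And>z. (\<lambda>n. \<sigma> n z) \<longlonglongrightarrow> F z"
    by metis
  have "\<forall>\<^sub>F n in sequentially. sup_dist (\<sigma> n) F < e" if "e > 0" for e
  proof -
    have "\<forall>\<^sub>F n in sequentially. \<bar>\<sigma> n z - F z\<bar> < e" for z
      using tendstoD[OF F[of z] \<open>e > 0\<close>] by (simp add: dist_real_def)
    then show ?thesis
      unfolding sup_dist_less_iff by (rule eventually_all_finite)
  qed
  then show "\<exists>F. limitin (Metric_space.mtopology UNIV sup_dist) \<sigma> F sequentially"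
    unfolding Metric_space.limitin_metric[OF Metric_space_sup_dist] by auto
qed

lemma decseq_periodic_contraction:
  fixes a :: "nat \<Rightarrow> real"
  assumes "decseq a" and contract: "\<And>n. a (N + n) \<le> \<gamma> * a n" and "0 < N" "0 \<le> \<gamma>"
  shows "a n \<le> \<gamma>^(n div N) * a 0"
proof (induction n rule: less_induct)
  case (less n)
  show ?case
  proof (cases "n < N")
    case True
    then show ?thesis
      using decseqD[OF \<open>decseq a\<close>, of 0 n] by simp
  next
    case False
    then have n: "n = N + (n - N)" and div: "n div N = Suc ((n - N) div N)"
      using \<open>0 < N\<close> by (simp_all add: div_if)
    have "a n \<le> \<gamma> * a (n - N)"
      using contract[of "n - N"] n by simp
    also have "\<dots> \<le> \<gamma> * (\<gamma>^((n - N) div N) * a 0)"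
      using less[of "n - N"] \<open>0 < N\<close> \<open>0 \<le> \<gamma>\<close> False by (intro mult_left_mono) auto
    finally show ?thesis
      by (simp add: div)
  qed
qed

lemma eventually_contractive_fixpoint:
  fixes T :: "('z::finite \<Rightarrow> real) \<Rightarrow> 'z \<Rightarrow> real"
  assumes nonexpansive: "\<And>V W. sup_dist (T V) (T W) \<le> sup_dist V W"
    and contractive: "\<And>V W. sup_dist ((T^^N) V) ((T^^N) W) \<le> \<gamma> * sup_dist V W"
    and "0 < N" "0 \<le> \<gamma>" "\<gamma> < 1"
  obtains F where "T F = F" "\<And>V z. (\<lambda>n. (T^^n) V z) \<longlonglongrightarrow> F z"
proof -
  obtain F where F: "(T^^N) F = F"
    by (rule Metric_space.Banach_fixedpoint_thm[OF Metric_space_sup_dist mcomplete_sup_dist,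
          of "T^^N" \<gamma>]) (simp_all add: \<open>\<gamma> < 1\<close> contractive)
  have "(T^^N) (T F) = T F"
    using F funpow_swap1[of T N F] by simp
  then have TF: "T F = F"
    by (rule Metric_space.contraction_imp_unique_fixpoint[OF Metric_space_sup_dist,
          of "T^^N" "T F" F \<gamma>]) (simp_all add: F \<open>\<gamma> < 1\<close> contractive)
  have conv: "(\<lambda>n. (T^^n) V z) \<longlonglongrightarrow> F z" for V z
  proof -
    define a where "a n = sup_dist ((T^^n) V) F" for n
    have "decseq a"
      unfolding decseq_Suc_iff a_def using nonexpansive[of "(T^^_) V" F] by (simp add: TF)
    have a_contract: "a (N + n) \<le> \<gamma> * a n" for n
      using contractive[of "(T^^n) V" F] unfolding a_def by (simp add: funpow_add F)
    have a_bound: "a n \<le> \<gamma>^(n div N) * a 0" for n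
      using decseq_periodic_contraction[OF \<open>decseq a\<close> a_contract \<open>0 < N\<close> \<open>0 \<le> \<gamma>\<close>] .
    have "(\<lambda>n. \<gamma>^(n div N)) \<longlonglongrightarrow> 0"
      using \<open>0 \<le> \<gamma>\<close> \<open>\<gamma> < 1\<close>
      by (intro filterlim_compose[OF LIMSEQ_power_zero filterlim_at_top_div_const_nat]) (simp_all add: \<open>0 < N\<close>)
    then have lim: "(\<lambda>n. \<gamma>^(n div N) * a 0) \<longlonglongrightarrow> 0"
      by (rule tendsto_mult_left_zero)
    have bound: "norm ((T^^n) V z - F z) \<le> \<gamma>^(n div N) * a 0" for n
    proof -
      have "norm ((T^^n) V z - F z) \<le> a n"
        unfolding a_def real_norm_def by (rule abs_le_sup_dist)
      also have "\<dots> \<le> \<gamma>^(n div N) * a 0"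
        by (rule a_bound)
      finally show ?thesis .
    qed
    have "(\<lambda>n. (T^^n) V z - F z) \<longlonglongrightarrow> 0"
      using Lim_null_comparison[OF always_eventually[OF allI[OF bound]] lim] .
    then show ?thesis
      by (simp add: LIM_zero_iff)
  qed
  show thesis
    using that TF conv by blast
qed

lemma funpow_fixpoint_limit:
  fixes T :: "('a \<Rightarrow> 'b::t2_space) \<Rightarrow> 'a \<Rightarrow> 'b"
  assumes "T W = W" and "(\<lambda>n. (T^^n) W z) \<longlonglongrightarrow> l"
  shows "W z = l"
proof -
  have "(T^^n) W = W" for n
    by (induction n) (simp_all add: assms(1))
  then have "(\<lambda>n. W z) \<longlonglongrightarrow> l"
    using assms(2) by simp
  then show ?thesis
    by (rule LIMSEQ_const_iff[THEN iffD1])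
qed

lemma is_mdp_nonneg: "is_mdp p \<Longrightarrow> 0 \<le> p s a s'"
  unfolding is_mdp_def by auto

lemma is_mdp_sum: "is_mdp p \<Longrightarrow> (\<Sum>s'\<in>UNIV. p s a s') = 1"
  unfolding is_mdp_def by auto

definition succ_expect :: "('s::finite \<Rightarrow> 'a::finite \<Rightarrow> 's \<Rightarrow> real) \<Rightarrow> 's set
    \<Rightarrow> ('s \<times> bool \<Rightarrow> real) \<Rightarrow> 's \<times> bool \<Rightarrow> 'a \<Rightarrow> real" where
  "succ_expect p G f z a = (\<Sum>s'\<in>UNIV. p (fst z) a s' * f (s', snd z \<and> fst z \<notin> G))"

definition max_step :: "('s::finite \<Rightarrow> 'a::finite \<Rightarrow> 's \<Rightarrow> real) \<Rightarrow> 's set \<Rightarrow> 's set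
    \<Rightarrow> ('s \<times> bool \<Rightarrow> real) \<Rightarrow> 's \<times> bool \<Rightarrow> real" where
  "max_step p G Sterm f z = (if fst z \<in> Sterm then 0 else Max (range (succ_expect p G f z)))"

lemma succ_expect_mono:
  assumes "is_mdp p" "\<And>w. f w \<le> g w"
  shows "succ_expect p G f z a \<le> succ_expect p G g z a"
  unfolding succ_expect_def by (intro sum_mono mult_left_mono assms(2) is_mdp_nonneg[OF assms(1)])

lemma succ_expect_const: "is_mdp p \<Longrightarrow> succ_expect p G (\<lambda>_. c) z a = c"
  unfolding succ_expect_def by (simp add: is_mdp_sum flip: sum_distrib_right)

lemma succ_expect_cmult: "succ_expect p G (\<lambda>w. c * f w) z a = c * succ_expect p G f z a"
  unfolding succ_expect_def by (simp add: sum_distrib_left mult.left_commute)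

lemma max_step_mono:
  assumes "is_mdp p" "\<And>w. f w \<le> g w"
  shows "max_step p G Sterm f z \<le> max_step p G Sterm g z"
proof -
  have "Max (range (succ_expect p G f z)) \<le> Max (range (succ_expect p G g z))"
    by (rule Max.boundedI) (auto intro: order_trans[OF succ_expect_mono[OF assms] Max_ge])
  then show ?thesis
    unfolding max_step_def by simp
qed

lemma max_step_const: "is_mdp p \<Longrightarrow> max_step p G Sterm (\<lambda>_. c) z = (if fst z \<in> Sterm then 0 else c)"
  unfolding max_step_def by (simp add: succ_expect_const)

lemma max_step_cmult:
  assumes "0 \<le> c"
  shows "max_step p G Sterm (\<lambda>w. c * f w) z = c * max_step p G Sterm f z"
proof -
  have "Max ((*) c ` range (succ_expect p G f z)) = c * Max (range (succ_expect p G f z))"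
    by (rule hom_Max_commute[symmetric]) (auto simp: max_mult_distrib_left assms)
  then show ?thesis
    unfolding max_step_def succ_expect_cmult by (simp add: image_image)
qed

definition max_step_lipschitz :: "('s::finite \<Rightarrow> 'a::finite \<Rightarrow> 's \<Rightarrow> real) \<Rightarrow> 's set \<Rightarrow> 's set
    \<Rightarrow> (('s \<times> bool \<Rightarrow> real) \<Rightarrow> 's \<times> bool \<Rightarrow> real) \<Rightarrow> bool" where
  "max_step_lipschitz p G Sterm T \<longleftrightarrow>
     (\<forall>V W z. \<bar>T V z - T W z\<bar> \<le> max_step p G Sterm (\<lambda>w. \<bar>V w - W w\<bar>) z)"

lemma max_step_lipschitz_funpow:
  assumes mdp: "is_mdp p" and T: "max_step_lipschitz p G Sterm T"
  shows "\<bar>(T^^n) V z - (T^^n) W z\<bar> \<le> sup_dist V W * (max_step p G Sterm ^^ n) (\<lambda>_. 1) z"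
proof (induction n arbitrary: z)
  case 0
  then show ?case by (simp add: abs_le_sup_dist)
next
  case (Suc n)
  have "\<bar>(T^^Suc n) V z - (T^^Suc n) W z\<bar>
      \<le> max_step p G Sterm (\<lambda>w. \<bar>(T^^n) V w - (T^^n) W w\<bar>) z"
    using T unfolding max_step_lipschitz_def by (simp del: split_paired_All)
  also have "\<dots> \<le> max_step p G Sterm (\<lambda>w. sup_dist V W * (max_step p G Sterm ^^ n) (\<lambda>_. 1) w) z"
    by (rule max_step_mono[OF mdp Suc])
  also have "\<dots> = sup_dist V W * (max_step p G Sterm ^^ Suc n) (\<lambda>_. 1) z"
    by (simp add: max_step_cmult sup_dist_nonneg)
  finally show ?case .
qed

lemma max_step_funpow_one_bounds:
  assumes "is_mdp p"
  shows "0 \<le> (max_step p G Sterm ^^ n) (\<lambda>_. 1) z" "(max_step p G Sterm ^^ n) (\<lambda>_. 1) z \<le> 1"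
proof -
  have "0 \<le> (max_step p G Sterm ^^ n) (\<lambda>_. 1) z \<and> (max_step p G Sterm ^^ n) (\<lambda>_. 1) z \<le> 1"
  proof (induction n arbitrary: z)
    case (Suc n)
    have "max_step p G Sterm (\<lambda>_. 0) z \<le> max_step p G Sterm ((max_step p G Sterm ^^ n) (\<lambda>_. 1)) z"
      by (rule max_step_mono[OF assms]) (use Suc in auto)
    moreover have "max_step p G Sterm ((max_step p G Sterm ^^ n) (\<lambda>_. 1)) z \<le> max_step p G Sterm (\<lambda>_. 1) z"
      by (rule max_step_mono[OF assms]) (use Suc in auto)
    ultimately show ?case
      by (auto simp: max_step_const[OF assms] split: if_splits)
  qed simp
  then show "0 \<le> (max_step p G Sterm ^^ n) (\<lambda>_. 1) z" "(max_step p G Sterm ^^ n) (\<lambda>_. 1) z \<le> 1"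
    by auto
qed

lemma max_step_funpow_one_decseq:
  assumes "is_mdp p"
  shows "decseq (\<lambda>n. (max_step p G Sterm ^^ n) (\<lambda>_. 1) z)"
proof -
  have "(max_step p G Sterm ^^ Suc n) (\<lambda>_. 1) z \<le> (max_step p G Sterm ^^ n) (\<lambda>_. 1) z" for n
  proof (induction n arbitrary: z)
    case 0
    then show ?case using max_step_funpow_one_bounds(2)[OF assms, of 1] by simp
  next
    case (Suc n)
    then show ?case by (simp add: max_step_mono[OF assms])
  qed
  then show ?thesis
    unfolding decseq_Suc_iff by blast
qed

lemma kern_nonneg:
  assumes "is_mdp p" "is_policy \<pi>"
  shows "0 \<le> kern p G Sterm \<pi> v w"
  using assms is_mdp_nonneg[OF assms(1)] unfolding kern_def is_policy_def is_dist_def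
  by (auto intro!: sum_nonneg mult_nonneg_nonneg)

lemma occ_nonneg:
  assumes "is_mdp p" "is_policy \<pi>"
  shows "0 \<le> occ p G Sterm \<pi> z n w"
  by (induction n arbitrary: w) (auto intro!: sum_nonneg mult_nonneg_nonneg kern_nonneg[OF assms])

lemma sum_UNIV_prod_bool:
  fixes f :: "'s::finite \<times> bool \<Rightarrow> real"
  shows "(\<Sum>v\<in>UNIV. f v) = (\<Sum>s\<in>UNIV. f (s, True) + f (s, False))"
proof -
  have "(\<Sum>v\<in>UNIV. f v) = (\<Sum>s\<in>UNIV. \<Sum>b\<in>UNIV. f (s, b))"
    by (simp add: sum.cartesian_product flip: UNIV_Times_UNIV)
  then show ?thesis
    by (simp add: UNIV_bool add.commute)
qed

lemma sum_kern_mult: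
  "(\<Sum>v\<in>UNIV. kern p G Sterm \<pi> z v * V v) =
    (if fst z \<in> Sterm then 0 else
      (\<Sum>s'\<in>UNIV. (\<Sum>a\<in>UNIV. \<pi> (fst z) (snd z) a * p (fst z) a s') * V (s', snd z \<and> fst z \<notin> G)))"
  unfolding kern_def by (subst sum_UNIV_prod_bool) (auto intro: sum.cong)

definition det_policy :: "('s \<times> bool \<Rightarrow> 'a) \<Rightarrow> 's \<Rightarrow> bool \<Rightarrow> 'a \<Rightarrow> real" where
  "det_policy act s x a = (if a = act (s, x) then 1 else 0)"

lemma is_policy_det_policy: "is_policy (det_policy act)"
  unfolding is_policy_def is_dist_def det_policy_def by simp

lemma sum_det_policy:
  fixes act :: "'s \<times> bool \<Rightarrow> 'a::finite"
  shows "(\<Sum>a\<in>UNIV. det_policy act s x a * f a) = f (act (s, x))"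
proof -
  have "(\<Sum>a\<in>UNIV. det_policy act s x a * f a) = (\<Sum>a\<in>UNIV. if a = act (s, x) then f a else 0)"
    by (intro sum.cong) (auto simp: det_policy_def)
  then show ?thesis
    by simp
qed

lemma occ_mass_ge_one_closed:
  assumes "is_mdp p" "is_policy \<pi>"
    and closed: "\<And>v. v \<in> B \<Longrightarrow> (\<Sum>w\<in>B. kern p G Sterm \<pi> v w) = 1"
    and "z \<in> B"
  shows "1 \<le> (\<Sum>w\<in>B. occ p G Sterm \<pi> z n w)"
proof (induction n)
  case 0
  then show ?case using \<open>z \<in> B\<close> by (simp add: if_distrib cong: if_cong)
next
  case (Suc n)
  have "(\<Sum>v\<in>B. occ p G Sterm \<pi> z n v)
      = (\<Sum>v\<in>B. occ p G Sterm \<pi> z n v * (\<Sum>w\<in>B. kern p G Sterm \<pi> v w))"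
    by (simp add: closed)
  also have "\<dots> \<le> (\<Sum>v\<in>UNIV. occ p G Sterm \<pi> z n v * (\<Sum>w\<in>B. kern p G Sterm \<pi> v w))"
    by (rule sum_mono2) (auto intro!: mult_nonneg_nonneg sum_nonneg occ_nonneg kern_nonneg assms)
  also have "\<dots> = (\<Sum>w\<in>B. occ p G Sterm \<pi> z (Suc n) w)"
    by (simp add: sum_distrib_left sum.swap[of _ B])
  finally show ?case
    using Suc by linarith
qed

text \<open>The mass that a deterministic policy keeps inside a set it never leaves does not decrease,
  which the standing assumption forbids.\<close>

lemma standing_assumption_no_trap:
  assumes mdp: "is_mdp p" and standing: "standing_assumption p G Sterm"
    and nonterm: "\<And>z. z \<in> B \<Longrightarrow> fst z \<notin> Sterm"
    and closed: "\<And>z s'. z \<in> B \<Longrightarrow> p (fst z) (act z) s' \<noteq> 0 \<Longrightarrow> (s', snd z \<and> fst z \<notin> G) \<in> B"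
  shows "B = {}"
proof (rule ccontr)
  assume "B \<noteq> {}"
  then obtain z where "z \<in> B" by blast
  define \<pi> where "\<pi> = det_policy act"
  have pol: "is_policy \<pi>"
    unfolding \<pi>_def by (rule is_policy_det_policy)
  have kern_outside: "kern p G Sterm \<pi> v w = 0" if "v \<in> B" "w \<notin> B" for v w
    using closed[OF \<open>v \<in> B\<close>, of "fst w"] that
    by (cases w) (auto simp: kern_def \<pi>_def sum_det_policy)
  have "(\<Sum>w\<in>B. kern p G Sterm \<pi> v w) = 1" if "v \<in> B" for v
  proof -
    have "(\<Sum>w\<in>B. kern p G Sterm \<pi> v w) = (\<Sum>w\<in>UNIV. kern p G Sterm \<pi> v w * 1)"
      by (simp add: sum.mono_neutral_left kern_outside[OF that])
    also have "\<dots> = 1"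
      unfolding sum_kern_mult using nonterm[OF that] by (simp add: \<pi>_def sum_det_policy is_mdp_sum[OF mdp])
    finally show ?thesis .
  qed
  then have mass: "1 \<le> (\<Sum>w\<in>B. occ p G Sterm \<pi> z n w)" for n
    by (rule occ_mass_ge_one_closed[OF mdp pol _ \<open>z \<in> B\<close>])
  obtain m where m: "not_term_prob p G Sterm \<pi> z m < 1"
    using standing pol unfolding standing_assumption_def by blast
  have "(\<Sum>w\<in>B. occ p G Sterm \<pi> z m w) \<le> not_term_prob p G Sterm \<pi> z m"
    unfolding not_term_prob_def
    by (rule sum_mono2) (use nonterm in \<open>auto simp: occ_nonneg[OF mdp pol]\<close>)
  then show False
    using m mass[of m] by linarith
qed

lemma succ_expect_ge_one_support:
  assumes mdp: "is_mdp p" and le1: "\<And>w. f w \<le> 1" and ge1: "1 \<le> succ_expect p G f z a"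
    and "p (fst z) a s' \<noteq> 0"
  shows "1 \<le> f (s', snd z \<and> fst z \<notin> G)"
proof -
  let ?h = "\<lambda>s'. p (fst z) a s' * (1 - f (s', snd z \<and> fst z \<notin> G))"
  have h_nonneg: "0 \<le> ?h s'" for s'
    using le1 is_mdp_nonneg[OF mdp] by (auto intro: mult_nonneg_nonneg)
  have "(\<Sum>s'\<in>UNIV. ?h s') = 1 - succ_expect p G f z a"
    unfolding succ_expect_def by (simp add: right_diff_distrib sum_subtractf is_mdp_sum[OF mdp])
  moreover have "0 \<le> (\<Sum>s'\<in>UNIV. ?h s')"
    by (rule sum_nonneg) (rule h_nonneg)
  ultimately have "(\<Sum>s'\<in>UNIV. ?h s') = 0"
    using ge1 by linarith
  then have "?h s' = 0"
    using sum_nonneg_eq_0_iff[of UNIV ?h] h_nonneg by simp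
  then show ?thesis
    using \<open>p (fst z) a s' \<noteq> 0\<close> by simp
qed

text \<open>One action serves every \<open>k\<close> at once because the iterates decrease in \<open>k\<close> and there are
  only finitely many actions.\<close>

lemma max_step_funpow_one_persist:
  assumes mdp: "is_mdp p" and persist: "\<forall>k. 1 \<le> (max_step p G Sterm ^^ k) (\<lambda>_. 1) z"
  shows "fst z \<notin> Sterm"
    and "\<exists>a. \<forall>s'. p (fst z) a s' \<noteq> 0 \<longrightarrow> (\<forall>k. 1 \<le> (max_step p G Sterm ^^ k) (\<lambda>_. 1) (s', snd z \<and> fst z \<notin> G))"
proof -
  define u where "u k = (max_step p G Sterm ^^ k) (\<lambda>_. 1)" for k
  show nonterm: "fst z \<notin> Sterm"
    using persist[rule_format, of 1] by (auto simp: max_step_def)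
  have "\<exists>a. \<forall>k. 1 \<le> succ_expect p G (u k) z a"
  proof (rule ccontr)
    assume "\<nexists>a. \<forall>k. 1 \<le> succ_expect p G (u k) z a"
    then obtain kf where kf: "\<And>a. succ_expect p G (u (kf a)) z a < 1"
      by (metis not_le)
    define K where "K = (\<Sum>a\<in>UNIV. kf a)"
    have "Max (range (succ_expect p G (u K) z)) \<in> range (succ_expect p G (u K) z)"
      by (rule Max_in) auto
    then obtain a where "succ_expect p G (u K) z a = Max (range (succ_expect p G (u K) z))"
      by (metis rangeE)
    also have "\<dots> = u (Suc K) z"
      using nonterm by (simp add: u_def max_step_def)
    finally have "1 \<le> succ_expect p G (u K) z a"
      using persist unfolding u_def by metis
    moreover have "succ_expect p G (u K) z a \<le> succ_expect p G (u (kf a)) z a"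
      using decseqD[OF max_step_funpow_one_decseq[OF mdp]] member_le_sum[of a UNIV kf]
      by (intro succ_expect_mono[OF mdp]) (simp add: u_def K_def)
    ultimately show False
      using kf[of a] by linarith
  qed
  then obtain a where a: "\<And>k. 1 \<le> succ_expect p G (u k) z a"
    by blast
  have "1 \<le> u k (s', snd z \<and> fst z \<notin> G)" if "p (fst z) a s' \<noteq> 0" for s' k
    by (rule succ_expect_ge_one_support[OF mdp _ a that]) (simp add: u_def max_step_funpow_one_bounds(2)[OF mdp])
  then show "\<exists>a. \<forall>s'. p (fst z) a s' \<noteq> 0 \<longrightarrow> (\<forall>k. 1 \<le> (max_step p G Sterm ^^ k) (\<lambda>_. 1) (s', snd z \<and> fst z \<notin> G))"
    unfolding u_def by blast
qed

lemma max_step_funpow_one_contracts: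
  fixes p :: "'s::finite \<Rightarrow> 'a::finite \<Rightarrow> 's \<Rightarrow> real"
  assumes mdp: "is_mdp p" and standing: "standing_assumption p G Sterm"
  obtains N \<gamma> where "0 < N" "0 \<le> \<gamma>" "\<gamma> < 1" "\<And>z. (max_step p G Sterm ^^ N) (\<lambda>_. 1) z \<le> \<gamma>"
proof -
  define u where "u k = (max_step p G Sterm ^^ k) (\<lambda>_. 1)" for k
  define B where "B = {z. \<forall>k. 1 \<le> u k z}"
  have "\<forall>z\<in>B. \<exists>a. \<forall>s'. p (fst z) a s' \<noteq> 0 \<longrightarrow> (s', snd z \<and> fst z \<notin> G) \<in> B"
    using max_step_funpow_one_persist(2)[OF mdp] unfolding B_def u_def by blast
  then obtain act where act: "\<And>z s'. z \<in> B \<Longrightarrow> p (fst z) (act z) s' \<noteq> 0 \<Longrightarrow> (s', snd z \<and> fst z \<notin> G) \<in> B"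
    by metis
  have "B = {}"
    by (rule standing_assumption_no_trap[OF mdp standing, where act = act])
      (use max_step_funpow_one_persist(1)[OF mdp] act in \<open>auto simp: B_def u_def\<close>)
  then have "\<forall>z. \<exists>k. u k z < 1"
    unfolding B_def by (auto simp: not_le)
  then obtain kf where kf: "\<And>z. u (kf z) z < 1"
    by metis
  define N where "N = Suc (\<Sum>z\<in>UNIV. kf z)"
  have uN: "u N z < 1" for z
  proof -
    have "kf z \<le> N"
      unfolding N_def using member_le_sum[of z UNIV kf] by simp
    then have "u N z \<le> u (kf z) z"
      using decseqD[OF max_step_funpow_one_decseq[OF mdp, where G=G and Sterm=Sterm and z=z]]
      unfolding u_def by blast
    then show ?thesis
      using kf[of z] by linarith
  qed
  define \<gamma> where "\<gamma> = Max (range (u N))"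
  have "\<gamma> \<in> range (u N)"
    unfolding \<gamma>_def by (rule Max_in) auto
  then have "0 \<le> \<gamma>" "\<gamma> < 1"
    using uN max_step_funpow_one_bounds(1)[OF mdp] by (auto simp: u_def)
  moreover have "u N z \<le> \<gamma>" for z
    unfolding \<gamma>_def by (rule Max_ge) auto
  ultimately show thesis
    using that[of N \<gamma>] by (simp add: N_def u_def)
qed

lemma max_step_lipschitz_fixpoint:
  fixes p :: "'s::finite \<Rightarrow> 'a::finite \<Rightarrow> 's \<Rightarrow> real"
  assumes mdp: "is_mdp p" and standing: "standing_assumption p G Sterm"
    and T: "max_step_lipschitz p G Sterm T"
  obtains F where "T F = F" "\<And>V z. (\<lambda>n. (T^^n) V z) \<longlonglongrightarrow> F z"
proof -
  obtain N \<gamma> where N: "0 < N" "0 \<le> \<gamma>" "\<gamma> < 1" "\<And>z. (max_step p G Sterm ^^ N) (\<lambda>_. 1) z \<le> \<gamma>"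
    using max_step_funpow_one_contracts[OF mdp standing] by blast
  have bound: "sup_dist ((T^^n) V) ((T^^n) W) \<le> c * sup_dist V W"
    if "\<And>z. (max_step p G Sterm ^^ n) (\<lambda>_. 1) z \<le> c" for n c V W
    unfolding sup_dist_le_iff
  proof
    fix z
    have "\<bar>(T^^n) V z - (T^^n) W z\<bar> \<le> sup_dist V W * (max_step p G Sterm ^^ n) (\<lambda>_. 1) z"
      by (rule max_step_lipschitz_funpow[OF mdp T])
    also have "\<dots> \<le> c * sup_dist V W"
      using mult_left_mono[OF that[of z] sup_dist_nonneg[of V W]] by (simp add: mult.commute)
    finally show "\<bar>(T^^n) V z - (T^^n) W z\<bar> \<le> c * sup_dist V W" .
  qed
  show thesis
  proof (rule eventually_contractive_fixpoint[of T N \<gamma>, OF _ _ N(1-3) that])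
    show "sup_dist (T V) (T W) \<le> sup_dist V W" for V W
      using bound[of 1 1 V W] max_step_funpow_one_bounds(2)[OF mdp, of 1] by simp
    show "sup_dist ((T^^N) V) ((T^^N) W) \<le> \<gamma> * sup_dist V W" for V W
      by (rule bound[OF N(4)])
  qed
qed

lemma abs_succ_expect_diff_le:
  assumes "is_mdp p"
  shows "\<bar>succ_expect p G V z a - succ_expect p G W z a\<bar> \<le> succ_expect p G (\<lambda>w. \<bar>V w - W w\<bar>) z a"
proof -
  let ?n = "\<lambda>s'. (s', snd z \<and> fst z \<notin> G)"
  have "\<bar>succ_expect p G V z a - succ_expect p G W z a\<bar> = \<bar>\<Sum>s'\<in>UNIV. p (fst z) a s' * (V (?n s') - W (?n s'))\<bar>"
    unfolding succ_expect_def by (simp add: sum_subtractf right_diff_distrib)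
  also have "\<dots> \<le> (\<Sum>s'\<in>UNIV. \<bar>p (fst z) a s' * (V (?n s') - W (?n s'))\<bar>)"
    by (rule sum_abs)
  also have "\<dots> = succ_expect p G (\<lambda>w. \<bar>V w - W w\<bar>) z a"
    unfolding succ_expect_def by (simp add: abs_mult is_mdp_nonneg[OF assms])
  finally show ?thesis .
qed

lemma Td_loc_max_step_lipschitz:
  assumes mdp: "is_mdp p" and q: "is_dist q"
  shows "\<bar>Td_loc p G Sterm q V s x - Td_loc p G Sterm q W s x\<bar>
         \<le> max_step p G Sterm (\<lambda>w. \<bar>V w - W w\<bar>) (s, x)"
proof (cases "s \<in> Sterm")
  case False
  let ?D = "\<lambda>w. \<bar>V w - W w\<bar>"
  have q_nonneg: "0 \<le> q a" for a
    using q unfolding is_dist_def by auto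
  have "\<bar>Td_loc p G Sterm q V s x - Td_loc p G Sterm q W s x\<bar>
      = \<bar>\<Sum>a\<in>UNIV. q a * (succ_expect p G V (s, x) a - succ_expect p G W (s, x) a)\<bar>"
    using False unfolding Td_loc_def succ_expect_def
    by (simp add: sum_subtractf right_diff_distrib)
  also have "\<dots> \<le> (\<Sum>a\<in>UNIV. q a * succ_expect p G ?D (s, x) a)"
  proof (rule order_trans[OF sum_abs sum_mono])
    fix a
    from abs_succ_expect_diff_le[OF mdp]
    show "\<bar>q a * (succ_expect p G V (s, x) a - succ_expect p G W (s, x) a)\<bar> \<le> q a * succ_expect p G ?D (s, x) a"
      using q_nonneg[of a] by (simp add: abs_mult mult_left_mono)
  qed
  also have "\<dots> \<le> (\<Sum>a\<in>UNIV. q a * max_step p G Sterm ?D (s, x))"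
    using False q_nonneg by (intro sum_mono mult_left_mono) (simp_all add: max_step_def)
  also have "\<dots> = max_step p G Sterm ?D (s, x)"
    using q unfolding is_dist_def by (simp flip: sum_distrib_right)
  finally show ?thesis .
qed (simp add: Td_loc_def max_step_def)

lemma Td_max_step_lipschitz:
  assumes "is_mdp p" "is_policy \<pi>"
  shows "max_step_lipschitz p G Sterm (Td p G Sterm \<pi>)"
  using Td_loc_max_step_lipschitz[OF assms(1)] assms(2)
  unfolding max_step_lipschitz_def Td_def is_policy_def by simp

lemma Td_mono:
  assumes "is_mdp p" "is_policy \<pi>" "\<And>w. V w \<le> W w"
  shows "Td p G Sterm \<pi> V z \<le> Td p G Sterm \<pi> W z"
  using assms is_mdp_nonneg[OF assms(1)] unfolding Td_def Td_loc_def is_policy_def is_dist_def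
  by (auto intro!: sum_mono mult_left_mono)

definition running_cost :: "'s set \<Rightarrow> 's set \<Rightarrow> 's \<times> bool \<Rightarrow> real" where
  "running_cost G Sterm w = (if fst w \<in> Sterm then 0 else dcost G (fst w) (snd w))"

definition expected_cost :: "('s::finite \<Rightarrow> 'a::finite \<Rightarrow> 's \<Rightarrow> real) \<Rightarrow> 's set \<Rightarrow> 's set
    \<Rightarrow> ('s \<Rightarrow> bool \<Rightarrow> 'a \<Rightarrow> real) \<Rightarrow> nat \<Rightarrow> 's \<times> bool \<Rightarrow> real" where
  "expected_cost p G Sterm \<pi> t z = (\<Sum>w\<in>UNIV. occ p G Sterm \<pi> z t w * running_cost G Sterm w)"

lemma Td_eq_running_cost_plus_kern:
  "Td p G Sterm \<pi> V z = running_cost G Sterm z + (\<Sum>v\<in>UNIV. kern p G Sterm \<pi> z v * V v)"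
proof (cases "fst z \<in> Sterm")
  case False
  have "(\<Sum>s'\<in>UNIV. (\<Sum>a\<in>UNIV. \<pi> (fst z) (snd z) a * p (fst z) a s') * V (s', snd z \<and> fst z \<notin> G))
      = (\<Sum>a\<in>UNIV. \<pi> (fst z) (snd z) a * (\<Sum>s'\<in>UNIV. p (fst z) a s' * V (s', snd z \<and> fst z \<notin> G)))"
    by (simp add: sum_distrib_left sum_distrib_right mult.assoc) (rule sum.swap)
  then show ?thesis
    using False by (simp add: Td_def Td_loc_def running_cost_def sum_kern_mult)
qed (simp add: Td_def Td_loc_def running_cost_def sum_kern_mult)

lemma occ_Suc_left:
  "occ p G Sterm \<pi> z (Suc t) w = (\<Sum>v\<in>UNIV. kern p G Sterm \<pi> z v * occ p G Sterm \<pi> v t w)"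
proof (induction t arbitrary: w)
  case 0
  show ?case by (simp add: if_distrib if_distribR cong: if_cong)
next
  case (Suc t)
  have "occ p G Sterm \<pi> z (Suc (Suc t)) w
      = (\<Sum>u\<in>UNIV. (\<Sum>v\<in>UNIV. kern p G Sterm \<pi> z v * occ p G Sterm \<pi> v t u) * kern p G Sterm \<pi> u w)"
    using Suc by simp
  also have "\<dots> = (\<Sum>v\<in>UNIV. kern p G Sterm \<pi> z v * (\<Sum>u\<in>UNIV. occ p G Sterm \<pi> v t u * kern p G Sterm \<pi> u w))"
    by (simp add: sum_distrib_left sum_distrib_right mult.assoc) (rule sum.swap)
  finally show ?case
    by simp
qed

lemma expected_cost_0: "expected_cost p G Sterm \<pi> 0 z = running_cost G Sterm z"
  unfolding expected_cost_def by (simp add: if_distrib if_distribR cong: if_cong)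

lemma expected_cost_Suc:
  "expected_cost p G Sterm \<pi> (Suc t) z = (\<Sum>v\<in>UNIV. kern p G Sterm \<pi> z v * expected_cost p G Sterm \<pi> t v)"
  unfolding expected_cost_def occ_Suc_left
  by (simp add: sum_distrib_left sum_distrib_right mult.assoc) (rule sum.swap)

lemma Td_funpow_zero:
  "(Td p G Sterm \<pi> ^^ n) (\<lambda>_. 0) z = (\<Sum>t<n. expected_cost p G Sterm \<pi> t z)"
proof (induction n arbitrary: z)
  case (Suc n)
  have "(Td p G Sterm \<pi> ^^ Suc n) (\<lambda>_. 0) z
      = running_cost G Sterm z + (\<Sum>v\<in>UNIV. kern p G Sterm \<pi> z v * (Td p G Sterm \<pi> ^^ n) (\<lambda>_. 0) v)"
    by (simp add: Td_eq_running_cost_plus_kern)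
  also have "\<dots> = running_cost G Sterm z + (\<Sum>v\<in>UNIV. kern p G Sterm \<pi> z v * (\<Sum>t<n. expected_cost p G Sterm \<pi> t v))"
    by (simp only: Suc.IH)
  also have "\<dots> = expected_cost p G Sterm \<pi> 0 z + (\<Sum>t<n. expected_cost p G Sterm \<pi> (Suc t) z)"
    by (simp add: expected_cost_0 expected_cost_Suc sum_distrib_left) (rule sum.swap)
  also have "\<dots> = (\<Sum>t<Suc n. expected_cost p G Sterm \<pi> t z)"
    by (rule sum.lessThan_Suc_shift[symmetric])
  finally show ?case .
qed simp

lemma Vpi_fixpoint:
  assumes mdp: "is_mdp p" and standing: "standing_assumption p G Sterm" and pol: "is_policy \<pi>"
  shows "Td p G Sterm \<pi> (Vpi p G Sterm \<pi>) = Vpi p G Sterm \<pi>"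
    and "(\<lambda>n. (Td p G Sterm \<pi> ^^ n) V z) \<longlonglongrightarrow> Vpi p G Sterm \<pi> z"
proof -
  obtain F where F: "Td p G Sterm \<pi> F = F" "\<And>V z. (\<lambda>n. (Td p G Sterm \<pi> ^^ n) V z) \<longlonglongrightarrow> F z"
    using max_step_lipschitz_fixpoint[OF mdp standing Td_max_step_lipschitz[OF mdp pol]] by blast
  have "(\<lambda>t. expected_cost p G Sterm \<pi> t z) sums F z" for z
    using F(2)[of "\<lambda>_. 0" z] unfolding sums_def Td_funpow_zero .
  then have "Vpi p G Sterm \<pi> = F"
    unfolding Vpi_def by (auto simp: sums_iff expected_cost_def running_cost_def)
  then show "Td p G Sterm \<pi> (Vpi p G Sterm \<pi>) = Vpi p G Sterm \<pi>"
    and "(\<lambda>n. (Td p G Sterm \<pi> ^^ n) V z) \<longlonglongrightarrow> Vpi p G Sterm \<pi> z"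
    using F by simp_all
qed

lemma Vpi_le_of_Td_le:
  assumes mdp: "is_mdp p" and standing: "standing_assumption p G Sterm" and pol: "is_policy \<pi>"
    and excessive: "\<And>w. Td p G Sterm \<pi> V w \<le> V w"
  shows "Vpi p G Sterm \<pi> z \<le> V z"
proof -
  have iterates_le: "(Td p G Sterm \<pi> ^^ n) V w \<le> V w" for n w
  proof (induction n arbitrary: w)
    case (Suc n)
    have "(Td p G Sterm \<pi> ^^ Suc n) V w \<le> Td p G Sterm \<pi> V w"
      using Td_mono[OF mdp pol Suc] by simp
    also have "\<dots> \<le> V w"
      by (rule excessive)
    finally show ?case .
  qed simp
  show ?thesis
    by (rule LIMSEQ_le_const2[OF Vpi_fixpoint(2)[OF mdp standing pol]]) (use iterates_le in blast)
qed

lemma Texp_Pair: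
  "Texp p G Sterm L V (s, x) = Sup {Td_loc p G Sterm q V s x | q. feasible_loc p G Sterm L s x q}"
  by (simp add: Texp_def)

lemma Td_loc_le_Texp:
  assumes mdp: "is_mdp p" and q: "feasible_loc p G Sterm L s x q"
  shows "Td_loc p G Sterm q V s x \<le> Texp p G Sterm L V (s, x)"
proof -
  let ?S = "{Td_loc p G Sterm q V s x | q. feasible_loc p G Sterm L s x q}"
  have "Td_loc p G Sterm q V s x \<le> 1 + max_step p G Sterm (\<lambda>w. \<bar>V w\<bar>) (s, x)"
    if "feasible_loc p G Sterm L s x q" for q
  proof -
    have "Td_loc p G Sterm q (\<lambda>_. 0) s x \<le> 1"
      by (simp add: Td_loc_def dcost_def)
    then show ?thesis
      using Td_loc_max_step_lipschitz[OF mdp, of q G Sterm V s x "\<lambda>_. 0"] that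
      unfolding feasible_loc_def by simp
  qed
  then have "bdd_above ?S"
    by (intro bdd_aboveI[where M = "1 + max_step p G Sterm (\<lambda>w. \<bar>V w\<bar>) (s, x)"]) blast
  then show ?thesis
    unfolding Texp_Pair using q by (auto intro: cSup_upper)
qed

lemma Texp_max_step_lipschitz:
  assumes mdp: "is_mdp p" and nonempty: "\<And>s x. \<exists>q. feasible_loc p G Sterm L s x q"
  shows "max_step_lipschitz p G Sterm (Texp p G Sterm L)"
proof -
  have one_sided: "Texp p G Sterm L V (s, x) \<le> Texp p G Sterm L W (s, x) + max_step p G Sterm (\<lambda>w. \<bar>V w - W w\<bar>) (s, x)"
    for V W s x
    unfolding Texp_Pair[of p G Sterm L V]
  proof (rule cSup_least)
    show "{Td_loc p G Sterm q V s x | q. feasible_loc p G Sterm L s x q} \<noteq> {}"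
      using nonempty by blast
  next
    fix y assume "y \<in> {Td_loc p G Sterm q V s x | q. feasible_loc p G Sterm L s x q}"
    then obtain q where q: "feasible_loc p G Sterm L s x q" and y: "y = Td_loc p G Sterm q V s x"
      by blast
    then show "y \<le> Texp p G Sterm L W (s, x) + max_step p G Sterm (\<lambda>w. \<bar>V w - W w\<bar>) (s, x)"
      using Td_loc_max_step_lipschitz[OF mdp, of q G Sterm V s x W] Td_loc_le_Texp[OF mdp q, of W]
      unfolding feasible_loc_def by linarith
  qed
  show ?thesis
    unfolding max_step_lipschitz_def
  proof (intro allI)
    fix V W z
    show "\<bar>Texp p G Sterm L V z - Texp p G Sterm L W z\<bar> \<le> max_step p G Sterm (\<lambda>w. \<bar>V w - W w\<bar>) z"
      using one_sided[of V "fst z" "snd z" W] one_sided[of W "fst z" "snd z" V]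
      by (simp add: abs_minus_commute)
  qed
qed

lemma feasible_loc_policy:
  assumes "is_policy \<pi>" "\<And>z. Td p G Sterm \<pi> L z \<le> L z"
  shows "feasible_loc p G Sterm L s x (\<pi> s x)"
  using assms(1) assms(2)[of "(s, x)"] unfolding feasible_loc_def is_policy_def Td_def by simp

lemma greedy_policy_optimal:
  assumes mdp: "is_mdp p" and standing: "standing_assumption p G Sterm"
    and fixpoint: "Texp p G Sterm L V = V"
    and pol: "is_policy \<pi>e"
    and greedy: "\<And>s x. feasible_loc p G Sterm L s x (\<pi>e s x)
                  \<and> Td_loc p G Sterm (\<pi>e s x) V s x = Texp p G Sterm L V (s, x)"
  shows "Vpi p G Sterm \<pi>e = V"
    and "\<And>z. Td p G Sterm \<pi>e L z \<le> L z"
    and "\<And>\<pi> z. is_policy \<pi> \<Longrightarrow> (\<forall>z. Td p G Sterm \<pi> L z \<le> L z) \<Longrightarrow> Vpi p G Sterm \<pi> z \<le> V z"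
proof -
  have V_fixpoint: "Td p G Sterm \<pi>e V = V"
  proof
    fix z
    show "Td p G Sterm \<pi>e V z = V z"
      using greedy[of "fst z" "snd z"] fixpoint unfolding Td_def by simp
  qed
  show "Vpi p G Sterm \<pi>e = V"
  proof
    fix z
    show "Vpi p G Sterm \<pi>e z = V z"
      using funpow_fixpoint_limit[OF V_fixpoint Vpi_fixpoint(2)[OF mdp standing pol]] by simp
  qed
  show "Td p G Sterm \<pi>e L z \<le> L z" for z
    using greedy[of "fst z" "snd z"] unfolding feasible_loc_def Td_def by simp
  show "Vpi p G Sterm \<pi> z \<le> V z" if "is_policy \<pi>" "\<forall>z. Td p G Sterm \<pi> L z \<le> L z" for \<pi> z
  proof (rule Vpi_le_of_Td_le[OF mdp standing \<open>is_policy \<pi>\<close>])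
    fix w
    have "feasible_loc p G Sterm L (fst w) (snd w) (\<pi> (fst w) (snd w))"
      by (rule feasible_loc_policy) (use that in auto)
    then have "Td_loc p G Sterm (\<pi> (fst w) (snd w)) V (fst w) (snd w) \<le> Texp p G Sterm L V (fst w, snd w)"
      by (rule Td_loc_le_Texp[OF mdp])
    then show "Td p G Sterm \<pi> V w \<le> V w"
      using fixpoint by (simp add: Td_def)
  qed
qed

theorem proposition2:
  fixes p :: "'s::finite \<Rightarrow> 'a::finite \<Rightarrow> 's \<Rightarrow> real"
    and G Sterm S0 :: "'s set"
    and \<alpha> :: real
    and L :: "'s \<times> bool \<Rightarrow> real"
    and \<pi>s :: "'s \<Rightarrow> bool \<Rightarrow> 'a \<Rightarrow> real"
    and s0 :: 's
  assumes mdp: "is_mdp p"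
    and standing: "standing_assumption p G Sterm"
    and alpha: "0 < \<alpha>" "\<alpha> < 1"
    and pol_s: "is_policy \<pi>s"
    and lyap: "lyapunov p G Sterm \<alpha> S0 L \<pi>s"
  shows "\<exists>Vexp.
      Texp p G Sterm L Vexp = Vexp
    \<and> (\<forall>W. Texp p G Sterm L W = W \<longrightarrow> W = Vexp)
    \<and> (\<forall>V0 z. (\<lambda>n. ((Texp p G Sterm L) ^^ n) V0 z) \<longlonglongrightarrow> Vexp z)
    \<and> (\<forall>\<pi>e. is_policy \<pi>e
           \<and> (\<forall>s x. feasible_loc p G Sterm L s x (\<pi>e s x)
                   \<and> Td_loc p G Sterm (\<pi>e s x) Vexp s x = Texp p G Sterm L Vexp (s, x))
         \<longrightarrow> Vpi p G Sterm \<pi>e = Vexp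
           \<and> (\<forall>z. Td p G Sterm \<pi>e L z \<le> L z)
           \<and> (\<forall>\<pi>. is_policy \<pi> \<and> (\<forall>z. Td p G Sterm \<pi> L z \<le> L z)
                  \<longrightarrow> Vpi p G Sterm \<pi> (s0, True) \<le> Vpi p G Sterm \<pi>e (s0, True)))"
proof -
  \<comment> \<open>Of the Lyapunov property only the inequality for \<open>\<pi>s\<close> is used, to make the constraint sets
    nonempty.\<close>
  have nonempty: "\<exists>q. feasible_loc p G Sterm L s x q" for s x
    using feasible_loc_policy[OF pol_s] lyap unfolding lyapunov_def by blast
  obtain Vexp where fixpoint: "Texp p G Sterm L Vexp = Vexp"
    and iterates: "\<And>V0 z. (\<lambda>n. (Texp p G Sterm L ^^ n) V0 z) \<longlonglongrightarrow> Vexp z"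
    using max_step_lipschitz_fixpoint[OF mdp standing Texp_max_step_lipschitz[OF mdp nonempty]] by blast
  have unique: "W = Vexp" if "Texp p G Sterm L W = W" for W
  proof
    fix z
    show "W z = Vexp z"
      by (rule funpow_fixpoint_limit[OF that iterates])
  qed
  show ?thesis
    by (intro exI[of _ Vexp] conjI fixpoint allI impI iterates unique)
      (auto simp: fixpoint greedy_policy_optimal[OF mdp standing fixpoint])
qed

end
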